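(* Consider the $k$-agent prophet game with random tie-breaking. For every agent $i$, the single threshold strategy $T^1=\frac{1}{k+1}\mathbb{E}[y_1]$ guarantees agent $i$ an expected utility of at least $\frac{1}{k+1}\mathbb{E}[y_1]=\frac{1}{k+1}\mathbb{E}[\max_t v_t]$, regardless of the strategies of the other agents.
   Context: Prophet game with competing agents: there are $n$ rewards $v_1,\ldots,v_n$, where $v_t$ is a non-negative real random variable drawn from a known distribution $F_t$ (with finite mean), independently across $t$. There are $k$ agents. At each time $t=1,\ldots,n$, the value $v_t$ is revealed to all agents, and every active agent (an agent who has not yet received a reward) decides whether to select $v_t$. If exactly one agent selects $v_t$, it is assigned to that agent. If several agents select it, it is assigned to one of them by the tie-breaking rule. Under random tie-breaking, the reward goes to a uniformly random agent among those selecting it. An agent who receives a reward becomes inactive, and unselected rewards are lost forever. A strategy of an agent is a (possibly randomized) rule that, for each $t$, decides whether to select $v_t$ based on $t$, the realized value $v_t$, and the set of currently active agents. The utility $u_i(S)$ of agent $i$ under strategy profile $S=(S_i,S_{-i})$ is her expected received reward (zero if she receives none). A strategy $S_i$ guarantees agent $i$ utility $\alpha$ if $u_i(S_i,S_{-i})\ge\alpha$ for every $S_{-i}$. The single threshold strategy $T$ selects $v_t$ if and only if the agent is still active and $v_t\ge T$. For $j=1,\ldots,n$, $y_j$ denotes the $j$-th largest value among $v_1,\ldots,v_n$. *)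

theory Defs
  imports "HOL-Probability.Probability"
begin

text \<open>A (behavioural) strategy profile is P :: agent => time => value => active set => real,
  where P j t v A is the probability that agent j selects value v at time t when the set of
  active agents is A.\<close>

definition sel_prob :: "(nat \<Rightarrow> real) \<Rightarrow> nat set \<Rightarrow> nat set \<Rightarrow> real" where
  "sel_prob q A S = (\<Prod>j\<in>A. if j \<in> S then q j else 1 - q j)"

text \<open>play F P i m t A: expected reward agent i receives from rounds t, t+1, ..., t+m-1
  when A is the set of active agents at the start of round t (random tie-breaking).\<close>
primrec play :: "(nat \<Rightarrow> real measure) \<Rightarrow> (nat \<Rightarrow> nat \<Rightarrow> real \<Rightarrow> nat set \<Rightarrow> real)
    \<Rightarrow> nat \<Rightarrow> nat \<Rightarrow> nat \<Rightarrow> nat set \<Rightarrow> real" where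
  "play F P i 0 t A = 0"
| "play F P i (Suc m) t A =
    (if i \<notin> A then 0 else
     (\<integral>v. (\<Sum>S\<in>Pow A. sel_prob (\<lambda>j. P j t v A) A S *
         (if S = {} then play F P i m (Suc t) A
          else (\<Sum>w\<in>S. (if w = i then v else play F P i m (Suc t) (A - {w})) / real (card S))))
      \<partial>(F t)))"

definition utility :: "(nat \<Rightarrow> real measure) \<Rightarrow> nat \<Rightarrow> nat
    \<Rightarrow> (nat \<Rightarrow> nat \<Rightarrow> real \<Rightarrow> nat set \<Rightarrow> real) \<Rightarrow> nat \<Rightarrow> real" where
  "utility F n k P i = play F P i n 1 {..<k}"

text \<open>Single threshold strategy T: select iff v >= T (selection only matters while active).\<close>
definition threshold_strategy :: "real \<Rightarrow> nat \<Rightarrow> real \<Rightarrow> nat set \<Rightarrow> real" where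
  "threshold_strategy T t v A = (if T \<le> v then 1 else 0)"

definition E_y1 :: "(nat \<Rightarrow> real measure) \<Rightarrow> nat \<Rightarrow> real" where
  "E_y1 F n = (\<integral>v. Max (v ` {1..n}) \<partial>(PiM {1..n} F))"

end

theory Submission
  imports Defs
begin

(* Fix the threshold T and let M \<le> T bound agent i's continuation value from below in every
   state where she is still active. In a round with value v < T she does not select and keeps
   at least M. If v \<ge> T she selects; among the s \<le> k selecting agents she wins v with
   probability 1/s and otherwise keeps at least M, so she gets at least M + (v - M)/k. Hence
   each round adds E[(v_t - T)^+]/k to her guarantee, and by induction over the rounds her
   utility is at least min T (\<Sum>t E[(v_t - T)^+] / k). Since
   E[max_t v_t] \<le> T + \<Sum>t E[(v_t - T)^+], the choice T = E[y_1]/(k+1) makes the sum at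
   least k T. *)

lemma sel_prob_sum_Pow:
  assumes "finite A"
  shows "(\<Sum>S\<in>Pow A. sel_prob q A S) = 1"
proof -
  have "(\<Sum>S\<in>Pow A. sel_prob q A S)
      = (\<Sum>S\<in>Pow A. (\<Prod>j\<in>S. q j) * (\<Prod>j\<in>A - S. 1 - q j))"
  proof (rule sum.cong[OF refl])
    fix S assume "S \<in> Pow A"
    then have "A \<inter> {j. j \<in> S} = S" "A \<inter> - {j. j \<in> S} = A - S" by auto
    then show "sel_prob q A S = (\<Prod>j\<in>S. q j) * (\<Prod>j\<in>A - S. 1 - q j)"
      unfolding sel_prob_def using prod.If_cases[OF assms, of "\<lambda>j. j \<in> S" q "\<lambda>j. 1 - q j"]
      by simp
  qed
  also have "\<dots> = (\<Prod>j\<in>A. q j + (1 - q j))"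
    by (rule prod_add[OF assms, symmetric])
  finally show ?thesis by simp
qed

lemma sel_prob_nonneg:
  assumes "\<forall>j\<in>A. 0 \<le> q j \<and> q j \<le> 1"
  shows "0 \<le> sel_prob q A S"
  unfolding sel_prob_def using assms by (intro prod_nonneg) auto

lemma sel_prob_le_1:
  assumes "\<forall>j\<in>A. 0 \<le> q j \<and> q j \<le> 1"
  shows "sel_prob q A S \<le> 1"
  unfolding sel_prob_def using assms by (intro prod_le_1) auto

lemma sel_prob_weighted_sum_ge:
  assumes "finite A" and "\<forall>j\<in>A. 0 \<le> q j \<and> q j \<le> 1"
    and "\<And>S. S \<subseteq> A \<Longrightarrow> sel_prob q A S \<noteq> 0 \<Longrightarrow> L \<le> b S"
  shows "L \<le> (\<Sum>S\<in>Pow A. sel_prob q A S * b S)"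
proof -
  have "L = (\<Sum>S\<in>Pow A. sel_prob q A S * L)"
    using sel_prob_sum_Pow[OF assms(1), of q] by (simp add: sum_distrib_right[symmetric])
  also have "\<dots> \<le> (\<Sum>S\<in>Pow A. sel_prob q A S * b S)"
  proof (rule sum_mono)
    fix S assume "S \<in> Pow A"
    then show "sel_prob q A S * L \<le> sel_prob q A S * b S"
      using assms(3)[of S] sel_prob_nonneg[OF assms(2), of S]
      by (cases "sel_prob q A S = 0") (auto intro: mult_left_mono)
  qed
  finally show ?thesis .
qed

definition round_payoff :: "nat \<Rightarrow> real \<Rightarrow> (nat set \<Rightarrow> real) \<Rightarrow> nat set \<Rightarrow> nat set \<Rightarrow> real" where
  "round_payoff i v c A S =
    (if S = {} then c A else (\<Sum>w\<in>S. (if w = i then v else c (A - {w})) / real (card S)))"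

lemma play_Suc_active:
  assumes "i \<in> A"
  shows "play F P i (Suc m) t A =
    (\<integral>v. (\<Sum>S\<in>Pow A. sel_prob (\<lambda>j. P j t v A) A S * round_payoff i v (play F P i m (Suc t)) A S)
      \<partial>F t)"
  using assms by (simp add: round_payoff_def)

lemma mean_ge:
  fixes f :: "'a \<Rightarrow> real"
  assumes "finite S" and "S \<noteq> {}" and "\<And>w. w \<in> S \<Longrightarrow> M \<le> f w"
  shows "M \<le> (\<Sum>w\<in>S. f w / real (card S))"
proof -
  have "M = (\<Sum>w\<in>S. M / real (card S))"
    using assms(1,2) by simp
  also have "\<dots> \<le> (\<Sum>w\<in>S. f w / real (card S))"
    using assms(3) by (intro sum_mono divide_right_mono) auto
  finally show ?thesis .
qed

lemma round_payoff_ge_if_not_selected: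
  assumes "finite A" and "S \<subseteq> A" and "i \<notin> S" and "M \<le> c A"
    and "\<And>w. w \<in> A \<Longrightarrow> w \<noteq> i \<Longrightarrow> M \<le> c (A - {w})"
  shows "M \<le> round_payoff i v c A S"
proof (cases "S = {}")
  case False
  with assms show ?thesis
    unfolding round_payoff_def by (auto intro!: mean_ge intro: finite_subset)
qed (use assms(4) in \<open>simp add: round_payoff_def\<close>)

lemma round_payoff_ge_if_selected:
  assumes "i \<in> S" and "S \<subseteq> A" and "finite A" and "card A \<le> k" and "M \<le> v"
    and "\<And>w. w \<in> A \<Longrightarrow> w \<noteq> i \<Longrightarrow> M \<le> c (A - {w})"
  shows "M + (v - M) / real k \<le> round_payoff i v c A S"
proof -
  define s where "s = card S"
  have "finite S" using assms(2,3) finite_subset by blast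
  then have s1: "1 \<le> s" using assms(1) unfolding s_def by (auto simp: Suc_le_eq card_gt_0_iff)
  have sk: "s \<le> k" using card_mono[OF assms(3,2)] assms(4) unfolding s_def by simp
  have "card (S - {i}) = s - 1"
    using assms(1) \<open>finite S\<close> unfolding s_def by simp
  then have "(real s - 1) * M / real s = (\<Sum>w\<in>S - {i}. M / real s)"
    using s1 by (simp add: of_nat_diff)
  also have "\<dots> \<le> (\<Sum>w\<in>S - {i}. c (A - {w}) / real s)"
    using assms(2,6) by (intro sum_mono divide_right_mono) auto
  also have "v / real s + \<dots> = (\<Sum>w\<in>S. (if w = i then v else c (A - {w})) / real s)"
    using sum.remove[OF \<open>finite S\<close> assms(1), of "\<lambda>w. (if w = i then v else c (A - {w})) / real s"]
    by simp
  finally have "v / real s + (real s - 1) * M / real s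
      \<le> (\<Sum>w\<in>S. (if w = i then v else c (A - {w})) / real s)"
    by simp
  moreover have "v / real s + (real s - 1) * M / real s = M + (v - M) / real s"
    using s1 by (simp add: field_simps)
  moreover have "(v - M) / real k \<le> (v - M) / real s"
    using s1 sk assms(5) by (intro divide_left_mono) auto
  ultimately show ?thesis
    using assms(1) unfolding round_payoff_def s_def by auto
qed

lemma threshold_round_ge:
  assumes "finite A" and "i \<in> A" and "card A \<le> k"
    and "\<forall>j\<in>A. 0 \<le> q j \<and> q j \<le> 1" and "q i = (if T \<le> v then 1 else 0)"
    and "M \<le> T" and "M \<le> c A" and "\<And>w. w \<in> A \<Longrightarrow> w \<noteq> i \<Longrightarrow> M \<le> c (A - {w})"
  shows "M + max (v - T) 0 / real k \<le> (\<Sum>S\<in>Pow A. sel_prob q A S * round_payoff i v c A S)"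
proof (rule sel_prob_weighted_sum_ge[OF assms(1,4)])
  fix S assume SA: "S \<subseteq> A" and nz: "sel_prob q A S \<noteq> 0"
  have "(if i \<in> S then q i else 1 - q i) \<noteq> 0"
    using nz assms(1,2) unfolding sel_prob_def by (auto intro: prod_zero)
  then have i_sel: "i \<in> S \<longleftrightarrow> T \<le> v"
    using assms(5) by (auto split: if_splits)
  show "M + max (v - T) 0 / real k \<le> round_payoff i v c A S"
  proof (cases "T \<le> v")
    case True
    have "max (v - T) 0 / real k \<le> (v - M) / real k"
      using True assms(6) by (intro divide_right_mono) auto
    also have "M + (v - M) / real k \<le> round_payoff i v c A S"
      using True i_sel assms(6) by (intro round_payoff_ge_if_selected) (use SA assms in auto)
    finally show ?thesis by simp
  next
    case False
    then show ?thesis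
      using i_sel round_payoff_ge_if_not_selected[OF assms(1) SA _ assms(7,8)] by simp
  qed
qed

lemma integrable_bounded_mult:
  fixes f g :: "'a \<Rightarrow> real"
  assumes "integrable M f" and "g \<in> borel_measurable M" and "\<And>x. \<bar>g x\<bar> \<le> B"
  shows "integrable M (\<lambda>x. g x * f x)"
proof (rule Bochner_Integration.integrable_bound[of M "\<lambda>x. B * f x"])
  show "integrable M (\<lambda>x. B * f x)" using assms(1) by simp
  show "(\<lambda>x. g x * f x) \<in> borel_measurable M"
    using assms(1,2) by measurable
  show "AE x in M. norm (g x * f x) \<le> norm (B * f x)"
  proof (intro AE_I2)
    fix x
    have "\<bar>g x\<bar> \<le> \<bar>B\<bar>" using assms(3)[of x] by linarith
    then show "norm (g x * f x) \<le> norm (B * f x)" by (simp add: abs_mult mult_right_mono)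
  qed
qed

lemma integrable_round_payoff_sum:
  assumes "finite_measure M" and "integrable M (\<lambda>x. x)" and "sets M = sets borel" and "finite A"
    and "\<And>j. (\<lambda>v. q j v) \<in> borel_measurable borel" and "\<And>j v. 0 \<le> q j v \<and> q j v \<le> 1"
  shows "integrable M (\<lambda>v. \<Sum>S\<in>Pow A. sel_prob (\<lambda>j. q j v) A S * round_payoff i v c A S)"
proof (intro Bochner_Integration.integrable_sum integrable_bounded_mult)
  fix S
  have "(\<lambda>v. q j v) \<in> borel_measurable M" for j
    using assms(5) by (simp add: measurable_cong_sets[OF assms(3) refl])
  then show "(\<lambda>v. sel_prob (\<lambda>j. q j v) A S) \<in> borel_measurable M"
    unfolding sel_prob_def by measurable
  show "\<bar>sel_prob (\<lambda>j. q j v) A S\<bar> \<le> 1" for v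
    using sel_prob_nonneg sel_prob_le_1 assms(6) by (simp add: abs_le_iff)
  show "integrable M (\<lambda>v. round_payoff i v c A S)"
  proof (cases "S = {}")
    case True
    then show ?thesis
      unfolding round_payoff_def using finite_measure.integrable_const[OF assms(1)] by simp
  next
    case False
    have "integrable M (\<lambda>v. (if w = i then v else c (A - {w})) / real (card S))" for w
      using assms(1,2) by (cases "w = i") (auto intro: finite_measure.integrable_const)
    with False show ?thesis
      unfolding round_payoff_def by (simp add: Bochner_Integration.integrable_sum)
  qed
qed

definition excess :: "real measure \<Rightarrow> real \<Rightarrow> real" where
  "excess M T = (\<integral>x. max (x - T) 0 \<partial>M)"

lemma excess_nonneg: "0 \<le> excess M T"
  unfolding excess_def by simp

lemma min_add_le:
  fixes T R e :: real
  assumes "0 \<le> e" and "0 < k"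
  shows "min T ((e + R) / k) \<le> min T (R / k) + e / k"
proof -
  have "0 \<le> e / k" using assms by simp
  then show ?thesis by (auto simp: add_divide_distrib min_def)
qed

lemma play_threshold_ge:
  fixes F :: "nat \<Rightarrow> real measure" and Q :: "nat \<Rightarrow> nat \<Rightarrow> real \<Rightarrow> nat set \<Rightarrow> real"
  assumes F: "\<And>t. t \<in> {1..n} \<Longrightarrow>
      prob_space (F t) \<and> sets (F t) = sets borel \<and> integrable (F t) (\<lambda>x. x)"
    and Q_bounded: "\<And>j t v A. 0 \<le> Q j t v A \<and> Q j t v A \<le> 1"
    and Q_measurable: "\<And>j t A. (\<lambda>v. Q j t v A) \<in> borel_measurable borel"
    and Q_threshold: "\<And>t v A. Q i t v A = (if T \<le> v then 1 else 0)"
    and "0 < k"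
  shows "i \<in> A \<Longrightarrow> A \<subseteq> {..<k} \<Longrightarrow> 1 \<le> t \<Longrightarrow> t + m \<le> Suc n \<Longrightarrow>
    min T ((\<Sum>s\<in>{t..<t + m}. excess (F s) T) / real k) \<le> play F Q i m t A"
proof (induction m arbitrary: t A)
  case 0
  then show ?case by simp
next
  case (Suc m)
  then have "t \<in> {1..n}" by auto
  with F interpret prob_space "F t" by blast
  define M where "M = min T ((\<Sum>s\<in>{Suc t..<Suc t + m}. excess (F s) T) / real k)"
  have "finite A" and "card A \<le> k"
    using Suc.prems(2) finite_subset card_mono[OF _ Suc.prems(2)] by auto
  have continuation_ge: "M \<le> play F Q i m (Suc t) B" if "i \<in> B" and "B \<subseteq> A" for B
    unfolding M_def using that Suc.prems by (intro Suc.IH) auto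
  have "(\<Sum>s\<in>{t..<t + Suc m}. excess (F s) T)
      = excess (F t) T + (\<Sum>s\<in>{Suc t..<Suc t + m}. excess (F s) T)"
    by (subst sum.atLeast_Suc_lessThan) auto
  then have "min T ((\<Sum>s\<in>{t..<t + Suc m}. excess (F s) T) / real k) \<le> M + excess (F t) T / real k"
    unfolding M_def using \<open>0 < k\<close> by (simp add: min_add_le excess_nonneg)
  also have "\<dots> = (\<integral>v. M + max (v - T) 0 / real k \<partial>F t)"
    using F \<open>t \<in> {1..n}\<close> by (simp add: excess_def prob_space)
  also have "\<dots> \<le> (\<integral>v. (\<Sum>S\<in>Pow A. sel_prob (\<lambda>j. Q j t v A) A S *
      round_payoff i v (play F Q i m (Suc t)) A S) \<partial>F t)"
  proof (rule integral_mono)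
    show "integrable (F t) (\<lambda>v. M + max (v - T) 0 / real k)"
      using F \<open>t \<in> {1..n}\<close> by simp
    show "integrable (F t) (\<lambda>v. \<Sum>S\<in>Pow A. sel_prob (\<lambda>j. Q j t v A) A S *
        round_payoff i v (play F Q i m (Suc t)) A S)"
      using F \<open>t \<in> {1..n}\<close> \<open>finite A\<close> Q_measurable Q_bounded
      by (intro integrable_round_payoff_sum) (auto intro: finite_measure_axioms)
    show "M + max (v - T) 0 / real k \<le> (\<Sum>S\<in>Pow A. sel_prob (\<lambda>j. Q j t v A) A S *
        round_payoff i v (play F Q i m (Suc t)) A S)" for v
      using Suc.prems(1) Q_bounded Q_threshold continuation_ge
      by (intro threshold_round_ge \<open>finite A\<close> \<open>card A \<le> k\<close>) (auto simp: M_def)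
  qed
  also have "\<dots> = play F Q i (Suc m) t A"
    using play_Suc_active[OF Suc.prems(1)] by simp
  finally show ?case .
qed

lemma Max_le_threshold_plus_excess:
  fixes x :: "'a \<Rightarrow> real"
  assumes "finite I" and "I \<noteq> {}"
  shows "Max (x ` I) \<le> T + (\<Sum>s\<in>I. max (x s - T) 0)"
proof -
  have "Max (x ` I) \<in> x ` I"
    using assms by (intro Max_in) auto
  then obtain s0 where "s0 \<in> I" and "Max (x ` I) = x s0"
    by auto
  moreover have "max (x s0 - T) 0 \<le> (\<Sum>s\<in>I. max (x s - T) 0)"
    using \<open>s0 \<in> I\<close> assms(1) by (intro member_le_sum) auto
  ultimately show ?thesis by linarith
qed

lemma
  fixes M :: "'i \<Rightarrow> 'a measure" and f :: "'a \<Rightarrow> real"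
  assumes "\<And>i. i \<in> I \<Longrightarrow> prob_space (M i)" and "s \<in> I" and "integrable (M s) f"
  shows integrable_PiM_component: "integrable (PiM I M) (\<lambda>x. f (x s))"
    and integral_PiM_component: "(\<integral>x. f (x s) \<partial>PiM I M) = (\<integral>x. f x \<partial>M s)"
proof -
  have component: "(\<lambda>x. x s) \<in> measurable (PiM I M) (M s)"
    using assms(2) by measurable
  have f: "f \<in> borel_measurable (M s)"
    using assms(3) by measurable
  have distr: "distr (PiM I M) (M s) (\<lambda>x. x s) = M s"
    by (rule distr_PiM_component[OF assms(1,2)])
  show "integrable (PiM I M) (\<lambda>x. f (x s))"
    using integrable_distr_eq[OF component f] distr assms(3) by simp
  show "(\<integral>x. f (x s) \<partial>PiM I M) = (\<integral>x. f x \<partial>M s)"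
    using integral_distr[OF component f] distr by simp
qed

lemma E_y1_le_threshold_plus_excess:
  assumes "1 \<le> n"
    and F: "\<And>t. t \<in> {1..n} \<Longrightarrow>
      prob_space (F t) \<and> sets (F t) = sets borel \<and> integrable (F t) (\<lambda>x. x)"
    and "integrable (PiM {1..n} F) (\<lambda>v. Max (v ` {1..n}))"
  shows "E_y1 F n \<le> T + (\<Sum>s\<in>{1..n}. excess (F s) T)"
proof -
  interpret Pi: prob_space "PiM {1..n} F"
    using F by (intro prob_space_PiM) auto
  have "integrable (F s) (\<lambda>x. max (x - T) 0)" if "s \<in> {1..n}" for s
  proof -
    interpret Fs: prob_space "F s" using F[OF that] by blast
    show ?thesis using F[OF that] by auto
  qed
  then have excess_integrable: "integrable (PiM {1..n} F) (\<lambda>x. max (x s - T) 0)"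
    and excess_eq: "(\<integral>x. max (x s - T) 0 \<partial>PiM {1..n} F) = excess (F s) T"
    if "s \<in> {1..n}" for s
    using that F unfolding excess_def
    by (auto intro!: integrable_PiM_component integral_PiM_component)
  have "E_y1 F n \<le> (\<integral>x. T + (\<Sum>s\<in>{1..n}. max (x s - T) 0) \<partial>PiM {1..n} F)"
    unfolding E_y1_def using assms(1,3) excess_integrable
    by (intro integral_mono Max_le_threshold_plus_excess Bochner_Integration.integrable_add
        Pi.integrable_const Bochner_Integration.integrable_sum) auto
  also have "\<dots> = (\<integral>x. T \<partial>PiM {1..n} F)
      + (\<integral>x. (\<Sum>s\<in>{1..n}. max (x s - T) 0) \<partial>PiM {1..n} F)"
  proof (rule Bochner_Integration.integral_add)
    show "integrable (PiM {1..n} F) (\<lambda>x. \<Sum>s\<in>{1..n}. max (x s - T) 0)"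
      using excess_integrable by (intro Bochner_Integration.integrable_sum) simp
  qed (rule Pi.integrable_const)
  also have "\<dots> = T + (\<Sum>s\<in>{1..n}. \<integral>x. max (x s - T) 0 \<partial>PiM {1..n} F)"
  proof -
    have "(\<integral>x. (\<Sum>s\<in>{1..n}. max (x s - T) 0) \<partial>PiM {1..n} F)
        = (\<Sum>s\<in>{1..n}. \<integral>x. max (x s - T) 0 \<partial>PiM {1..n} F)"
      using excess_integrable by (intro Bochner_Integration.integral_sum) simp
    then show ?thesis using Pi.prob_space by simp
  qed
  also have "\<dots> = T + (\<Sum>s\<in>{1..n}. excess (F s) T)"
    using excess_eq by simp
  finally show ?thesis .
qed

theorem mainTheorem3:
  fixes F :: "nat \<Rightarrow> real measure" and n k i :: nat
    and P :: "nat \<Rightarrow> nat \<Rightarrow> real \<Rightarrow> nat set \<Rightarrow> real"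
  assumes "1 \<le> n" and "i < k"
    and "\<forall>t\<in>{1..n}. prob_space (F t) \<and> sets (F t) = sets borel
                      \<and> (AE x in F t. 0 \<le> x) \<and> integrable (F t) (\<lambda>x. x)"
    and "\<forall>j t v A. j \<noteq> i \<longrightarrow> 0 \<le> P j t v A \<and> P j t v A \<le> 1"
    and "\<forall>j t A. j \<noteq> i \<longrightarrow> (\<lambda>v. P j t v A) \<in> borel_measurable borel"
  shows "utility F n k (P(i := threshold_strategy (E_y1 F n / real (k + 1)))) i
           \<ge> E_y1 F n / real (k + 1)"
proof -
  define T where "T = E_y1 F n / real (k + 1)"
  define R where "R = (\<Sum>s\<in>{1..n}. excess (F s) T)"
  have F: "prob_space (F t) \<and> sets (F t) = sets borel \<and> integrable (F t) (\<lambda>x. x)"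
    if "t \<in> {1..n}" for t
    using assms(3) that by blast
  have "min T (R / real k) \<le> utility F n k (P(i := threshold_strategy T)) i"
    unfolding utility_def R_def
    using play_threshold_ge[where Q = "P(i := threshold_strategy T)" and i = i and T = T and k = k
        and A = "{..<k}" and t = 1 and m = n, OF F] assms
    by (auto simp: threshold_strategy_def atLeastLessThanSuc_atLeastAtMost add.commute[of 1])
  moreover have "T \<le> R / real k"
  proof (cases "integrable (PiM {1..n} F) (\<lambda>v. Max (v ` {1..n}))")
    case True
    then have "real (k + 1) * T \<le> T + R"
      unfolding R_def T_def using E_y1_le_threshold_plus_excess[OF assms(1) F] by simp
    then show ?thesis
      using assms(2) by (simp add: field_simps)
  next
    case False
    then have "T = 0"
      unfolding T_def E_y1_def by (simp add: not_integrable_integral_eq)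
    then show ?thesis
      unfolding R_def by (simp add: sum_nonneg excess_nonneg)
  qed
  ultimately show ?thesis
    unfolding T_def by simp
qed

end
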